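(* Let $d\ge2$, $\nu\ge2$, and let $\Gamma$ be the $\mathbb Z^d$-periodic graph with vertex set $\mathbb Z^d\cup\{v_j+m:\ j=1,\dots,\nu-1,\ m\in\mathbb Z^d\}$ and edges: the lattice edges $(m,m+a_s)$, $m\in\mathbb Z^d$, $s=1,\dots,d$ (where $a_1,\dots,a_d$ is the standard basis), and the edges $(v_j+m,\,m)$, $j=1,\dots,\nu-1$, $m\in\mathbb Z^d$; $\mathbb Z^d$ acts by translation. Thus the fundamental graph $\Gamma_*$ consists of the vertex $v_\nu$ (class of $0$) with $d$ undirected loops of indices $a_1,\dots,a_d$, plus $\nu-1$ vertices $v_1,\dots,v_{\nu-1}$ joined to $v_\nu$ by edges of index $0$ (indices w.r.t. $V_0=\{v_1,\dots,v_{\nu-1},0\}$). Put $\xi=\nu-1+2d$ and $\vartheta_\pi=(\pi,\dots,\pi)$. Then $\Gamma$ is an exact loop graph with exact quasimomentum $\vartheta_\pi$, and: (i) the spectrum of the normalized Laplacian is $\sigma(\Delta)=\sigma_{ac}(\Delta)\cup\sigma_{fb}(\Delta)$ with $\sigma_{fb}(\Delta)=\{1\}$, a degenerate band of multiplicity $\nu-2$, and $\sigma_{ac}(\Delta)=\sigma^0_1\cup\sigma^0_\nu$, $\sigma^0_1=[0,\frac{2d}{\xi}]$, $\sigma^0_\nu=[2-\frac{2d}{\xi},2]$; (ii) for every real $\mathbb Z^d$-periodic potential $Q$, the spectrum of $H=\Delta+Q$ is $\sigma(H)=\bigcup_{n=1}^\nu[\lambda_n(0),\lambda_n(\vartheta_\pi)]$;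 (iii) let $q_j=Q(v_j)$, $j=1,\dots,\nu$, normalized so that $q_\nu=0$; if $q_1,\dots,q_{\nu-1}$ are pairwise distinct, then $\sigma(H)=\sigma_{ac}(H)$, i.e. $H$ has no eigenvalues of infinite multiplicity; (iv) if some value $q_*$ occurs exactly $m$ times among $q_1,\dots,q_{\nu-1}$, then $\{q_*+1\}$ is a degenerate band of $H$ of multiplicity $m-1$; (v) $|\sigma(H)|=\frac{4d}{\xi}$.
   Context: Normalized Laplacian on a graph with vertex set $V$: each undirected edge gives two oriented edges (a loop too), $\mathcal A$ the set of oriented edges, $\varkappa_v$ the number of oriented edges starting at $v$, $(\Delta f)(v)=f(v)-\sum_{(v,u)\in\mathcal A}\frac{f(u)}{\sqrt{\varkappa_v\varkappa_u}}$ on $\ell^2(V)$; $H=\Delta+Q$ with $Q:V\to\mathbb R$ translation invariant. Here $\varkappa=1$ at $v_j$ ($j<\nu$) and $\varkappa=\xi$ at lattice vertices. Edge index of an oriented edge $(u,v)$: writing each vertex as $v=v_0+[v]$ with $v_0\in V_0$, $[v]\in\mathbb Z^d$, $\tau(u,v)=[v]-[u]$; bridges are edges with nonzero index. Fiber operators for $\vartheta\in\mathbb T^d=\mathbb R^d/(2\pi\mathbb Z)^d$: $(\Delta(\vartheta)f)(v)=f(v)-\sum_{\mathbf e=(v,u)\in\mathcal A_*}\frac{e^{i\langle\tau(\mathbf e),\vartheta\rangle}}{\sqrt{\varkappa_v\varkappa_u}}f(u)$ on $\ell^2(V_* )$, $\mathcal A_*=\mathcal A/\mathbb Z^d$, and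 $H(\vartheta)=\Delta(\vartheta)+Q$, with eigenvalues $\lambda_1(\vartheta)\le\dots\le\lambda_\nu(\vartheta)$ (for $\Delta$: $\lambda^0_n(\vartheta)$). Bands: $\sigma_n(H)=\lambda_n(\mathbb T^d)$, $\sigma^0_n=\lambda^0_n(\mathbb T^d)$; $\sigma(H)$ is their union. A band that is a single point $\{\lambda_*\}$ is degenerate (an eigenvalue of infinite multiplicity); its multiplicity is the multiplicity of $\lambda_*$ as an eigenvalue of $H(\vartheta)$ for a.e. $\vartheta$; $\sigma_{fb}$ is the set of degenerate bands, $\sigma_{ac}$ the union of nondegenerate bands. $\Gamma$ is a loop graph if every bridge of $\Gamma_*$ is a loop; it is an exact loop graph with exact quasimomentum $\vartheta_0$ if moreover $\cos\langle\tau(\mathbf e),\vartheta_0\rangle=-1$ for every bridge $\mathbf e$ of $\Gamma_*$. *)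

theory Defs
  imports "HOL-Analysis.Analysis" "HOL-Computational_Algebra.Polynomial"
          "Jordan_Normal_Form.Char_Poly"
begin

text \<open>Fundamental graph \<Gamma>_* of a Z^d-periodic graph: vertices 1..N (finite set V_*),
  oriented edges given as a multiset of triples (u, v, tau) where tau :: int^'d is the
  edge index tau(u,v).  Every undirected edge (a loop too) contributes two oriented
  edges (u,v,tau) and (v,u,-tau).\<close>

type_synonym 'd oedge = "nat \<times> nat \<times> (int ^ 'd)"

definition esrc :: "'d oedge \<Rightarrow> nat" where "esrc e = fst e"
definition etgt :: "'d oedge \<Rightarrow> nat" where "etgt e = fst (snd e)"
definition eidx :: "'d oedge \<Rightarrow> int ^ 'd" where "eidx e = snd (snd e)"

definition pair_idx :: "int ^ 'd::finite \<Rightarrow> real ^ 'd \<Rightarrow> real" where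
  "pair_idx \<tau> \<theta> = (\<Sum>i\<in>UNIV. of_int (\<tau> $ i) * \<theta> $ i)"

definition kappa :: "'d oedge multiset \<Rightarrow> nat \<Rightarrow> nat" where
  "kappa A v = size (filter_mset (\<lambda>e. esrc e = v) A)"

definition fiber_entry :: "'d::finite oedge multiset \<Rightarrow> (nat \<Rightarrow> real) \<Rightarrow> real ^ 'd
     \<Rightarrow> nat \<Rightarrow> nat \<Rightarrow> complex" where
  "fiber_entry A Q \<theta> u w =
     (if u = w then 1 + complex_of_real (Q u) else 0)
     - (\<Sum>e\<in>#filter_mset (\<lambda>e. esrc e = u \<and> etgt e = w) A.
            cis (pair_idx (eidx e) \<theta>))
       / complex_of_real (sqrt (real (kappa A u) * real (kappa A w)))"

text \<open>H(theta) as an N x N matrix; row/column i corresponds to vertex i+1\<close>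
definition fiber_mat :: "nat \<Rightarrow> 'd::finite oedge multiset \<Rightarrow> (nat \<Rightarrow> real) \<Rightarrow> real ^ 'd
     \<Rightarrow> complex mat" where
  "fiber_mat N A Q \<theta> = mat N N (\<lambda>(i, j). fiber_entry A Q \<theta> (Suc i) (Suc j))"

text \<open>eigenvalues of H(theta) counted with multiplicity (H(theta) is Hermitian, so they are real)\<close>
definition fiber_eigs :: "nat \<Rightarrow> 'd::finite oedge multiset \<Rightarrow> (nat \<Rightarrow> real) \<Rightarrow> real ^ 'd
     \<Rightarrow> real multiset" where
  "fiber_eigs N A Q \<theta> = image_mset Re (proots (char_poly (fiber_mat N A Q \<theta>)))"

definition lam :: "nat \<Rightarrow> 'd::finite oedge multiset \<Rightarrow> (nat \<Rightarrow> real) \<Rightarrow> real ^ 'd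
     \<Rightarrow> nat \<Rightarrow> real" where
  "lam N A Q \<theta> n = sorted_list_of_multiset (fiber_eigs N A Q \<theta>) ! (n - 1)"

text \<open>band sigma_n(H) = lambda_n(T^d) (theta ranges over R^d, all functions are 2pi-periodic)\<close>
definition band :: "nat \<Rightarrow> 'd::finite oedge multiset \<Rightarrow> (nat \<Rightarrow> real) \<Rightarrow> nat \<Rightarrow> real set" where
  "band N A Q n = (\<lambda>\<theta>. lam N A Q \<theta> n) ` UNIV"

definition spec :: "nat \<Rightarrow> 'd::finite oedge multiset \<Rightarrow> (nat \<Rightarrow> real) \<Rightarrow> real set" where
  "spec N A Q = (\<Union>n\<in>{1..N}. band N A Q n)"

definition degenerate_band :: "nat \<Rightarrow> 'd::finite oedge multiset \<Rightarrow> (nat \<Rightarrow> real) \<Rightarrow> nat \<Rightarrow> bool" where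
  "degenerate_band N A Q n \<longleftrightarrow> (\<exists>c. band N A Q n = {c})"

definition spec_fb :: "nat \<Rightarrow> 'd::finite oedge multiset \<Rightarrow> (nat \<Rightarrow> real) \<Rightarrow> real set" where
  "spec_fb N A Q = {c. \<exists>n\<in>{1..N}. band N A Q n = {c}}"

definition spec_ac :: "nat \<Rightarrow> 'd::finite oedge multiset \<Rightarrow> (nat \<Rightarrow> real) \<Rightarrow> real set" where
  "spec_ac N A Q = (\<Union>n\<in>{n\<in>{1..N}. \<not> degenerate_band N A Q n}. band N A Q n)"

definition fb_multiplicity :: "nat \<Rightarrow> 'd::finite oedge multiset \<Rightarrow> (nat \<Rightarrow> real) \<Rightarrow> real
     \<Rightarrow> nat \<Rightarrow> bool" where
  "fb_multiplicity N A Q c m \<longleftrightarrow> (AE \<theta> in lborel. count (fiber_eigs N A Q \<theta>) c = m)"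

definition bridge :: "'d::finite oedge \<Rightarrow> bool" where
  "bridge e \<longleftrightarrow> eidx e \<noteq> 0"

definition loop_graph :: "'d::finite oedge multiset \<Rightarrow> bool" where
  "loop_graph A \<longleftrightarrow> (\<forall>e\<in>#A. bridge e \<longrightarrow> esrc e = etgt e)"

definition exact_loop_graph :: "'d::finite oedge multiset \<Rightarrow> real ^ 'd \<Rightarrow> bool" where
  "exact_loop_graph A \<theta>0 \<longleftrightarrow> loop_graph A \<and>
      (\<forall>e\<in>#A. bridge e \<longrightarrow> cos (pair_idx (eidx e) \<theta>0) = -1)"

text \<open>The specific graph: vertices v_1..v_{nu-1} (pendant, index 0 edges to v_nu) and
  v_nu (class of 0 in Z^d) carrying d undirected loops of indices a_1..a_d.\<close>
definition Gam :: "nat \<Rightarrow> ('d::finite) oedge multiset" where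
  "Gam \<nu> =
     image_mset (\<lambda>j. (j, \<nu>, 0)) (mset_set {1..<\<nu>})
   + image_mset (\<lambda>j. (\<nu>, j, 0)) (mset_set {1..<\<nu>})
   + image_mset (\<lambda>s. (\<nu>, \<nu>, axis s 1)) (mset_set (UNIV :: 'd set))
   + image_mset (\<lambda>s. (\<nu>, \<nu>, - axis s 1)) (mset_set (UNIV :: 'd set))"

definition theta_pi :: "real ^ 'd::finite" where
  "theta_pi = (\<chi> i. pi)"

end

theory Submission
  imports Defs "HOL-Real_Asymp.Real_Asymp"
begin

(* The fiber matrix H(\<theta>) of \<Gamma> is an arrowhead matrix: the pendant vertices v_1, ..., v_(\<nu>-1)
   contribute the diagonal entries 1 + Q j, each is coupled to v_\<nu> by the entry -1/sqrt \<xi>, and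
   the d loops at v_\<nu> only shift the corner entry by t = -(2/\<xi>) \<Sum>_s cos \<theta>_s, which sweeps
   [-T, T] with T = 2d/\<xi>, attaining -T at \<theta> = 0 and T at \<theta> = \<theta>_\<pi>.
   The eigenvalues of an arrowhead matrix are governed by the secular function
   y - c - t - (1/\<xi>) \<Sum>_j 1/(y - a_j): it increases from -\<infinity> to +\<infinity> between consecutive
   distinct diagonal entries (and on the two unbounded gaps), so each such gap carries exactly one
   eigenvalue, while a diagonal value repeated m times is an eigenvalue of multiplicity m - 1 for
   every t. Hence the n-th band is the image of [-T, T] under a nondecreasing function that is
   constant exactly when the n-th gap is collapsed, consecutive bands touch at most at endpoints,
   and since the eigenvalues sum to the trace, which moves with t, the band lengths add up to
   2T = 4d/\<xi>. *)

lemma count_image_mset_inj: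
  assumes "inj f" shows "count (image_mset f M) (f x) = count M x"
proof -
  have "f -` {f x} = {x}" using assms by (auto simp: inj_def)
  thus ?thesis by (cases "x \<in># M") (auto simp: count_image_mset not_in_iff)
qed

lemma coeff_prod_mset_linear_factors:
  fixes M :: "'a::comm_ring_1 multiset"
  shows "coeff (\<Prod>x\<in>#M. [:-x, 1:]) (size M) = 1 \<and>
         (\<forall>n>size M. coeff (\<Prod>x\<in>#M. [:-x, 1:]) n = 0) \<and>
         (M \<noteq> {#} \<longrightarrow> coeff (\<Prod>x\<in>#M. [:-x, 1:]) (size M - 1) = - sum_mset M)"
proof (induction M)
  case empty
  show ?case by (auto simp: coeff_eq_0)
next
  case (add x M)
  define q where "q = (\<Prod>x\<in>#M. [:-x, 1:])"
  have eq: "(\<Prod>x\<in>#add_mset x M. [:-x, 1:]) = [:-x, 1:] * q" by (simp add: q_def)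
  have coeff_Suc: "coeff ([:-x, 1:] * q) (Suc n) = - x * coeff q (Suc n) + coeff q n" for n
    by (simp add: mult_pCons_left)
  have IH: "coeff q (size M) = 1" "\<And>n. n > size M \<Longrightarrow> coeff q n = 0"
    "M \<noteq> {#} \<Longrightarrow> coeff q (size M - 1) = - sum_mset M"
    using add.IH unfolding q_def by auto
  show ?case unfolding eq size_add_mset
  proof (intro conjI allI impI)
    show "coeff ([:-x, 1:] * q) (Suc (size M)) = 1" using coeff_Suc IH by simp
    fix n assume "n > Suc (size M)"
    then obtain m where "n = Suc m" "m > size M" by (cases n) auto
    thus "coeff ([:-x, 1:] * q) n = 0" using coeff_Suc IH by simp
  next
    show "coeff ([:-x, 1:] * q) (Suc (size M) - 1) = - sum_mset (add_mset x M)"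
    proof (cases "M = {#}")
      case True
      thus ?thesis using IH by (simp add: mult_pCons_left)
    next
      case False
      then obtain m where "size M = Suc m" by (cases M) auto
      thus ?thesis using coeff_Suc[of m] IH False by simp
    qed
  qed
qed

lemma emeasure_lborel_UN_ordered_intervals:
  fixes l u :: "nat \<Rightarrow> real"
  assumes "\<And>k. k < n \<Longrightarrow> l k \<le> u k" "\<And>i j. i < j \<Longrightarrow> j < n \<Longrightarrow> u i \<le> l j"
  shows "emeasure lborel (\<Union>k<n. {l k..u k}) = ennreal (\<Sum>k<n. u k - l k)"
  using assms
proof (induction n)
  case 0 thus ?case by simp
next
  case (Suc n)
  define U where "U = (\<Union>k<n. {l k..u k})"
  have IH: "emeasure lborel U = ennreal (\<Sum>k<n. u k - l k)"
    unfolding U_def using Suc.prems by (intro Suc.IH) auto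
  have lu: "l n \<le> u n" using Suc.prems by auto
  have U_le: "U \<subseteq> {..l n}" unfolding U_def using Suc.prems(2)[of _ n] by force
  have "closed U" unfolding U_def by (intro closed_UN) auto
  hence U_sets: "U \<in> sets lborel" by simp
  have "(\<Union>k<Suc n. {l k..u k}) = (U \<union> {l n<..u n}) \<union> {l n}"
    unfolding U_def lessThan_Suc using lu by auto
  moreover have "U \<union> {l n<..u n} \<in> sets lborel" using U_sets by simp
  moreover have "{l n} \<in> null_sets lborel" by (simp add: countable_imp_null_set_lborel)
  ultimately have "emeasure lborel (\<Union>k<Suc n. {l k..u k}) = emeasure lborel (U \<union> {l n<..u n})"
    by (metis emeasure_Un_null_set)
  also have "\<dots> = emeasure lborel U + emeasure lborel {l n<..u n}"
    using U_le U_sets by (intro plus_emeasure[symmetric]) auto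
  also have "\<dots> = ennreal (\<Sum>k<n. u k - l k) + ennreal (u n - l n)"
    using IH lu by simp
  also have "\<dots> = ennreal (\<Sum>k<Suc n. u k - l k)"
    using Suc.prems(1) lu by (subst ennreal_plus[symmetric]) (auto intro: sum_nonneg)
  finally show ?case .
qed

lemma poly_eqI_cofinite:
  fixes p q :: "'a::field_char_0 poly"
  assumes "finite F" "\<And>z. z \<notin> F \<Longrightarrow> poly p z = poly q z"
  shows "p = q"
proof (rule ccontr)
  assume "p \<noteq> q"
  hence "finite {z. poly (p - q) z = 0}" by (intro poly_roots_finite) simp
  moreover have "- F \<subseteq> {z. poly (p - q) z = 0}" using assms(2) by auto
  ultimately have "finite (- F)" by (rule finite_subset[rotated])
  thus False using assms(1) by (metis Compl_partition finite_Un infinite_UNIV_char_0)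
qed

section \<open>Determinant of an arrowhead matrix\<close>

lemma arrowhead_LU:
  fixes B :: "'a::field mat" and m :: nat
  assumes B: "B \<in> carrier_mat (Suc m) (Suc m)"
    and off: "\<And>i j. i < m \<Longrightarrow> j < m \<Longrightarrow> i \<noteq> j \<Longrightarrow> B $$ (i,j) = 0"
    and diag: "\<And>i. i < m \<Longrightarrow> B $$ (i,i) \<noteq> 0"
  defines "s \<equiv> B $$ (m,m) - (\<Sum>i<m. B $$ (m,i) * B $$ (i,m) / B $$ (i,i))"
  defines "L \<equiv> mat (Suc m) (Suc m) (\<lambda>(i,j). if i = j then 1 else if i = m \<and> j < m then B $$ (m,j) / B $$ (j,j) else 0)"
  defines "U \<equiv> mat (Suc m) (Suc m) (\<lambda>(i,j). if i < m then B $$ (i,j) else if j = m then s else 0)"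
  shows "L * U = B"
proof (rule eq_matI)
  fix i j assume "i < dim_row B" "j < dim_col B"
  hence i: "i < Suc m" and j: "j < Suc m" using B by auto
  have "(L * U) $$ (i,j) = (\<Sum>k<m. L $$ (i,k) * U $$ (k,j)) + L $$ (i,m) * U $$ (m,j)"
    using i j by (simp add: L_def U_def scalar_prod_def lessThan_atLeast0)
  also have "\<dots> = B $$ (i,j)"
  proof (cases "i < m")
    case True
    have "(\<Sum>k<m. L $$ (i,k) * U $$ (k,j)) = (\<Sum>k<m. if k = i then B $$ (i,j) else 0)"
      by (rule sum.cong) (use True j in \<open>auto simp: L_def U_def\<close>)
    thus ?thesis using True j by (simp add: L_def)
  next
    case False
    hence im: "i = m" using i by auto
    show ?thesis
    proof (cases "j < m")
      case True
      have "(\<Sum>k<m. L $$ (i,k) * U $$ (k,j)) = (\<Sum>k<m. if k = j then B $$ (m,j) else 0)"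
        by (rule sum.cong) (use True im diag off in \<open>auto simp: L_def U_def\<close>)
      thus ?thesis using True im by (simp add: L_def U_def)
    next
      case False
      hence jm: "j = m" using j by auto
      have "(\<Sum>k<m. L $$ (i,k) * U $$ (k,j)) = (\<Sum>k<m. B $$ (m,k) * B $$ (k,m) / B $$ (k,k))"
        by (rule sum.cong) (use im jm in \<open>auto simp: L_def U_def\<close>)
      thus ?thesis using im jm by (simp add: L_def U_def s_def)
    qed
  qed
  finally show "(L * U) $$ (i,j) = B $$ (i,j)" .
qed (use B in \<open>auto simp: L_def U_def\<close>)

lemma det_arrowhead:
  fixes B :: "'a::field mat" and m :: nat
  assumes B: "B \<in> carrier_mat (Suc m) (Suc m)"
    and off: "\<And>i j. i < m \<Longrightarrow> j < m \<Longrightarrow> i \<noteq> j \<Longrightarrow> B $$ (i,j) = 0"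
    and diag: "\<And>i. i < m \<Longrightarrow> B $$ (i,i) \<noteq> 0"
  shows "det B = (\<Prod>i<m. B $$ (i,i)) * (B $$ (m,m) - (\<Sum>i<m. B $$ (m,i) * B $$ (i,m) / B $$ (i,i)))"
proof -
  define s where "s = B $$ (m,m) - (\<Sum>i<m. B $$ (m,i) * B $$ (i,m) / B $$ (i,i))"
  define L where "L = mat (Suc m) (Suc m) (\<lambda>(i,j). if i = j then 1 else if i = m \<and> j < m then B $$ (m,j) / B $$ (j,j) else 0)"
  define U where "U = mat (Suc m) (Suc m) (\<lambda>(i,j). if i < m then B $$ (i,j) else if j = m then s else 0)"
  have L: "L \<in> carrier_mat (Suc m) (Suc m)" and U: "U \<in> carrier_mat (Suc m) (Suc m)"
    unfolding L_def U_def by auto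
  have "det L = prod_list (diag_mat L)"
    by (rule det_lower_triangular[OF _ L]) (auto simp: L_def)
  also have "\<dots> = 1" unfolding prod_list_diag_prod using L by (simp add: L_def)
  finally have det_L: "det L = 1" .
  have "upper_triangular U" unfolding upper_triangular_def U_def using off by auto
  hence "det U = (\<Prod>i\<in>{0..<Suc m}. U $$ (i,i))"
    using U by (simp add: det_upper_triangular prod_list_diag_prod)
  also have "\<dots> = (\<Prod>i<m. B $$ (i,i)) * s"
    by (simp add: lessThan_atLeast0[symmetric] U_def)
  finally have det_U: "det U = (\<Prod>i<m. B $$ (i,i)) * s" .
  have "det B = det L * det U"
    using arrowhead_LU[OF B off diag] det_mult[OF L U] unfolding L_def U_def s_def by simp
  thus ?thesis using det_L det_U s_def by simp
qed

section \<open>The secular equation of an arrowhead matrix\<close>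

(* The N \<times> N Hermitian matrix with diagonal a 1, ..., a (N - 1), c + t, all other entries of the
   last row and column equal to -1/sqrt \<xi>, and zeros elsewhere; see char_poly_arrowhead. *)
locale arrowhead =
  fixes N :: nat and a :: "nat \<Rightarrow> real" and c \<xi> :: real
  assumes two_le_N: "2 \<le> N" and \<xi>_pos: "0 < \<xi>"
begin

definition J :: "nat set" where "J = {1..<N}"

definition ds :: "real list" where
  "ds = sorted_list_of_multiset (image_mset a (mset_set J))"

definition secular :: "real \<Rightarrow> real" where
  "secular y = y - c - (\<Sum>j\<in>J. 1 / (y - a j)) / \<xi>"

definition in_gap :: "nat \<Rightarrow> real \<Rightarrow> bool" where
  "in_gap k y \<longleftrightarrow> (k = 0 \<or> ds ! (k - 1) < y) \<and> (length ds \<le> k \<or> y < ds ! k)"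

definition collapsed :: "nat \<Rightarrow> bool" where
  "collapsed k \<longleftrightarrow> 0 < k \<and> k < length ds \<and> ds ! (k - 1) = ds ! k"

lemma finite_J [simp]: "finite J" and card_J: "card J = N - 1"
  by (auto simp: J_def)

lemma mset_ds: "mset ds = image_mset a (mset_set J)"
  by (simp add: ds_def)

lemma length_ds: "length ds = N - 1"
  by (metis mset_ds size_mset size_image_mset size_mset_set card_J)

lemma length_ds_pos: "0 < length ds"
  using length_ds two_le_N by simp

lemma sorted_ds: "sorted ds"
  by (simp add: ds_def)

lemma set_ds: "set ds = a ` J"
  by (metis mset_ds set_mset_mset set_image_mset finite_set_mset_mset_set finite_J)

lemma card_nth_ds_eq: "card {i. i < length ds \<and> ds ! i = y} = card {j\<in>J. a j = y}"
proof -
  have "card {i. i < length ds \<and> ds ! i = y} = count (mset ds) y"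
    unfolding count_mset count_list_eq_length_filter length_filter_conv_card
    by (intro arg_cong[where f=card]) auto
  also have "\<dots> = card {j\<in>J. a j = y}"
    by (auto simp: mset_ds count_image_mset' filter_mset_mset_set intro!: arg_cong[where f=card])
  finally show ?thesis .
qed

lemma in_gap_not_diag: assumes "in_gap k y" "k \<le> length ds" "j \<in> J" shows "y \<noteq> a j"
proof
  assume "y = a j"
  then obtain i where i: "i < length ds" "ds ! i = y"
    using assms(3) set_ds by (metis image_eqI in_set_conv_nth)
  show False
  proof (cases "i < k")
    case True
    hence "ds ! i \<le> ds ! (k - 1)" using assms(2) by (intro sorted_nth_mono[OF sorted_ds]) auto
    thus False using assms(1) True i unfolding in_gap_def by auto
  next
    case False
    hence "ds ! k \<le> ds ! i" using i by (intro sorted_nth_mono[OF sorted_ds]) auto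
    thus False using assms(1) False i unfolding in_gap_def by auto
  qed
qed

lemma in_gap_between: "in_gap k y1 \<Longrightarrow> in_gap k y2 \<Longrightarrow> y1 \<le> z \<Longrightarrow> z \<le> y2 \<Longrightarrow> in_gap k z"
  unfolding in_gap_def by auto

lemma secular_strict_mono_on_gap:
  assumes "in_gap k y1" "in_gap k y2" "y1 < y2" "k \<le> length ds"
  shows "secular y1 < secular y2"
proof -
  have "1 / (y2 - a j) \<le> 1 / (y1 - a j)" if j: "j \<in> J" for j
  proof -
    have "a j < y1 \<or> y2 < a j"
    proof (rule ccontr)
      assume "\<not> (a j < y1 \<or> y2 < a j)"
      hence "in_gap k (a j)" using in_gap_between[OF assms(1,2)] by simp
      thus False using in_gap_not_diag[OF _ assms(4) j] by blast
    qed
    thus ?thesis using assms(3) by (auto simp: divide_simps)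
  qed
  hence "(\<Sum>j\<in>J. 1 / (y2 - a j)) / \<xi> \<le> (\<Sum>j\<in>J. 1 / (y1 - a j)) / \<xi>"
    using \<xi>_pos by (intro divide_right_mono sum_mono) auto
  thus ?thesis using assms(3) unfolding secular_def by linarith
qed

lemma secular_le_iff_on_gap:
  assumes "in_gap k y1" "in_gap k y2" "k \<le> length ds"
  shows "secular y1 \<le> secular y2 \<longleftrightarrow> y1 \<le> y2"
  using secular_strict_mono_on_gap[OF assms(1,2) _ assms(3)]
    secular_strict_mono_on_gap[OF assms(2,1) _ assms(3)]
  by (cases y1 y2 rule: linorder_cases) auto

lemma secular_continuous_on: "S \<inter> a ` J = {} \<Longrightarrow> continuous_on S secular"
  unfolding secular_def using \<xi>_pos by (auto intro!: continuous_intros)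

lemma secular_at_top: "filterlim secular at_top at_top"
proof -
  have "((\<lambda>y. - c - (\<Sum>j\<in>J. 1 / (y - a j)) / \<xi>) \<longlongrightarrow> - c - (\<Sum>j\<in>J. 0) / \<xi>) at_top"
  proof -
    have "((\<lambda>y. \<Sum>j\<in>J. 1 / (y - a j)) \<longlongrightarrow> (\<Sum>j\<in>J. 0)) at_top"
      by (intro tendsto_sum) real_asymp
    thus ?thesis using \<xi>_pos by (intro tendsto_diff tendsto_const tendsto_divide) auto
  qed
  from filterlim_tendsto_add_at_top[OF this filterlim_ident]
  show ?thesis unfolding secular_def by (simp add: algebra_simps)
qed

definition regular_part :: "real \<Rightarrow> real \<Rightarrow> real" where
  "regular_part p y = y - c - (\<Sum>j\<in>{j\<in>J. a j \<noteq> p}. 1 / (y - a j)) / \<xi>"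

lemma secular_pole_split:
  "secular y = regular_part p y - card {j\<in>J. a j = p} / \<xi> * inverse (y - p)"
proof -
  have "J = {j\<in>J. a j = p} \<union> {j\<in>J. a j \<noteq> p}" by auto
  hence "(\<Sum>j\<in>J. 1 / (y - a j)) =
      (\<Sum>j\<in>{j\<in>J. a j = p}. 1 / (y - a j)) + (\<Sum>j\<in>{j\<in>J. a j \<noteq> p}. 1 / (y - a j))"
    by (metis (no_types, lifting) sum.union_disjoint finite_J finite_Un disjoint_iff mem_Collect_eq)
  also have "(\<Sum>j\<in>{j\<in>J. a j = p}. 1 / (y - a j)) = card {j\<in>J. a j = p} * inverse (y - p)"
    by (simp add: inverse_eq_divide)
  finally show ?thesis
    unfolding secular_def regular_part_def by (simp add: diff_divide_distrib add_divide_distrib)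
qed

lemma tendsto_regular_part: "(regular_part p \<longlongrightarrow> regular_part p p) (at p within S)"
  unfolding regular_part_def using \<xi>_pos by (auto intro!: tendsto_eq_intros)

lemma secular_at_right_pole:
  assumes "p \<in> a ` J" shows "filterlim secular at_bot (at_right p)"
proof -
  have "0 < card {j\<in>J. a j = p}" using assms by (auto simp: card_gt_0_iff)
  hence pole: "LIM y at_right p. - (card {j\<in>J. a j = p} / \<xi>) * inverse (y - p) :> at_bot"
    using \<xi>_pos
    by (intro filterlim_tendsto_neg_mult_at_bot[OF tendsto_const] filterlim_inverse_at_top
          tendsto_eq_intros) (auto simp: eventually_at_filter)
  have "secular = (\<lambda>y. regular_part p y + - (card {j\<in>J. a j = p} / \<xi>) * inverse (y - p))"
    using secular_pole_split[of _ p] by (simp add: fun_eq_iff)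
  thus ?thesis by (simp only:) (rule filterlim_tendsto_add_at_bot_iff[THEN iffD2, OF tendsto_regular_part pole])
qed

lemma secular_at_left_pole:
  assumes "p \<in> a ` J" shows "filterlim secular at_top (at_left p)"
proof -
  have "0 < card {j\<in>J. a j = p}" using assms by (auto simp: card_gt_0_iff)
  hence pole: "LIM y at_left p. card {j\<in>J. a j = p} / \<xi> * inverse (p - y) :> at_top"
    using \<xi>_pos
    by (intro filterlim_tendsto_pos_mult_at_top[OF tendsto_const] filterlim_inverse_at_top
          tendsto_eq_intros) (auto simp: eventually_at_filter)
  have "secular = (\<lambda>y. regular_part p y + card {j\<in>J. a j = p} / \<xi> * inverse (p - y))"
    using secular_pole_split[of _ p] inverse_minus_eq[of "_ - p"] by (simp add: fun_eq_iff)
  thus ?thesis by (simp only:) (rule filterlim_tendsto_add_at_top[OF tendsto_regular_part pole])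
qed

lemma secular_at_bot: "filterlim secular at_bot at_bot"
proof -
  have "((\<lambda>y. - c - (\<Sum>j\<in>J. 1 / (y - a j)) / \<xi>) \<longlongrightarrow> - c - (\<Sum>j\<in>J. 0) / \<xi>) at_bot"
  proof -
    have "((\<lambda>y. \<Sum>j\<in>J. 1 / (y - a j)) \<longlongrightarrow> (\<Sum>j\<in>J. 0)) at_bot"
      by (intro tendsto_sum) real_asymp
    thus ?thesis using \<xi>_pos by (intro tendsto_diff tendsto_const tendsto_divide) auto
  qed
  hence "LIM y at_bot. (- c - (\<Sum>j\<in>J. 1 / (y - a j)) / \<xi>) + y :> at_bot"
    by (subst filterlim_tendsto_add_at_bot_iff) (auto intro: filterlim_ident)
  thus ?thesis unfolding secular_def by (simp add: algebra_simps)
qed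

lemma exists_in_gap_secular_less:
  assumes "k \<le> length ds" "\<not> collapsed k"
  shows "\<exists>y. in_gap k y \<and> secular y < t"
proof (cases "k = 0")
  case True
  have "eventually (\<lambda>y. secular y < t \<and> y < ds ! 0) at_bot"
    using secular_at_bot unfolding filterlim_at_bot_dense by (intro eventually_conj) auto
  then obtain y where "secular y < t" "y < ds ! 0"
    using eventually_happens'[OF trivial_limit_at_bot_linorder] by blast
  thus ?thesis using True length_ds_pos unfolding in_gap_def by auto
next
  case False
  define lo where "lo = ds ! (k - 1)"
  have lo: "lo \<in> a ` J" using False assms(1) unfolding lo_def set_ds[symmetric] by simp
  have "eventually (\<lambda>y. length ds \<le> k \<or> y < ds ! k) (at_right lo)"
  proof (cases "k < length ds")
    case True
    hence "lo < ds ! k"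
      using assms False sorted_nth_mono[OF sorted_ds, of "k - 1" k]
      unfolding lo_def collapsed_def by fastforce
    from eventually_at_right_real[OF this] show ?thesis by (rule eventually_mono) auto
  qed simp
  hence "eventually (\<lambda>y. secular y < t \<and> lo < y \<and> (length ds \<le> k \<or> y < ds ! k)) (at_right lo)"
    using secular_at_right_pole[OF lo] unfolding filterlim_at_bot_dense
    by (intro eventually_conj eventually_at_right_less) auto
  then obtain y where "secular y < t" "lo < y" "length ds \<le> k \<or> y < ds ! k"
    using eventually_happens'[OF trivial_limit_at_right_real] by blast
  thus ?thesis using False unfolding in_gap_def lo_def by auto
qed

lemma exists_in_gap_secular_greater:
  assumes "k \<le> length ds" "\<not> collapsed k"
  shows "\<exists>y. in_gap k y \<and> t < secular y"
proof (cases "k = length ds")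
  case True
  have "eventually (\<lambda>y. t < secular y \<and> ds ! (k - 1) < y) at_top"
    using secular_at_top unfolding filterlim_at_top_dense by (intro eventually_conj) auto
  then obtain y where "t < secular y" "ds ! (k - 1) < y"
    using eventually_happens'[OF trivial_limit_at_top_linorder] by blast
  thus ?thesis using True unfolding in_gap_def by auto
next
  case False
  define up where "up = ds ! k"
  have up: "up \<in> a ` J" using False assms(1) unfolding up_def set_ds[symmetric] by simp
  have "eventually (\<lambda>y. k = 0 \<or> ds ! (k - 1) < y) (at_left up)"
  proof (cases "0 < k")
    case True
    hence "ds ! (k - 1) < up"
      using assms False sorted_nth_mono[OF sorted_ds, of "k - 1" k]
      unfolding up_def collapsed_def by fastforce
    from eventually_at_left_real[OF this] show ?thesis by (rule eventually_mono) auto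
  qed simp
  hence "eventually (\<lambda>y. t < secular y \<and> y < up \<and> (k = 0 \<or> ds ! (k - 1) < y)) (at_left up)"
    using secular_at_left_pole[OF up] unfolding filterlim_at_top_dense
    by (intro eventually_conj) (auto simp: eventually_at_filter)
  then obtain y where "t < secular y" "y < up" "k = 0 \<or> ds ! (k - 1) < y"
    using eventually_happens'[OF trivial_limit_at_left_real] by blast
  thus ?thesis using False unfolding in_gap_def up_def by auto
qed

lemma exists_in_gap_secular_eq:
  assumes "k \<le> length ds" "\<not> collapsed k"
  shows "\<exists>y. in_gap k y \<and> secular y = t"
proof -
  obtain y1 y2 where y1: "in_gap k y1" "secular y1 < t" and y2: "in_gap k y2" "t < secular y2"
    using exists_in_gap_secular_less[OF assms] exists_in_gap_secular_greater[OF assms] by blast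
  have "y1 \<le> y2" using secular_le_iff_on_gap[OF y1(1) y2(1) assms(1)] y1 y2 by simp
  moreover have "continuous_on {y1..y2} secular"
    using in_gap_between[OF y1(1) y2(1)] in_gap_not_diag[OF _ assms(1)]
    by (intro secular_continuous_on) fastforce
  ultimately obtain y where "y1 \<le> y" "y \<le> y2" "secular y = t"
    using IVT'[of secular y1 t y2] y1 y2 by auto
  thus ?thesis using in_gap_between[OF y1(1) y2(1)] by blast
qed

(* The (k+1)-st smallest eigenvalue: the root of the secular equation in gap k, or, if that gap
   is collapsed by a repeated diagonal entry, the entry itself. *)
definition eig :: "nat \<Rightarrow> real \<Rightarrow> real" where
  "eig k t = (if collapsed k then ds ! k else THE y. in_gap k y \<and> secular y = t)"

definition eig_list :: "real \<Rightarrow> real list" where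
  "eig_list t = map (\<lambda>k. eig k t) [0..<N]"

lemma eig_in_gap:
  assumes "k \<le> length ds" "\<not> collapsed k"
  shows "in_gap k (eig k t)" and "secular (eig k t) = t"
proof -
  have "\<exists>!y. in_gap k y \<and> secular y = t"
    using exists_in_gap_secular_eq[OF assms] secular_le_iff_on_gap[OF _ _ assms(1)]
    by (metis order_antisym order_refl)
  from theI'[OF this] show "in_gap k (eig k t)" "secular (eig k t) = t"
    using assms(2) unfolding eig_def by simp_all
qed

lemma eig_eqI:
  assumes "k \<le> length ds" "\<not> collapsed k" "in_gap k y" "secular y = t"
  shows "eig k t = y"
  using eig_in_gap[OF assms(1,2), of t] secular_le_iff_on_gap[OF _ assms(3,1)]
    secular_le_iff_on_gap[OF assms(3) _ assms(1)] assms(4)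
  by (metis order_antisym order_refl)

lemma eig_collapsed: "collapsed k \<Longrightarrow> eig k t = ds ! k"
  unfolding eig_def by simp

lemma eig_strict_mono:
  assumes "k \<le> length ds" "\<not> collapsed k" "t1 < t2"
  shows "eig k t1 < eig k t2"
  using secular_le_iff_on_gap[OF eig_in_gap(1)[OF assms(1,2)] eig_in_gap(1)[OF assms(1,2)] assms(1)]
    eig_in_gap(2)[OF assms(1,2)] assms(3)
  by (metis not_le)

lemma eig_mono: "k \<le> length ds \<Longrightarrow> t1 \<le> t2 \<Longrightarrow> eig k t1 \<le> eig k t2"
  using eig_strict_mono[of k t1 t2] eig_collapsed[of k]
  by (cases "collapsed k"; cases "t1 = t2") (auto simp: less_imp_le)

lemma eig_le_ds: assumes "k < length ds" shows "eig k t \<le> ds ! k"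
  using eig_in_gap(1)[of k t] eig_collapsed[of k t] assms unfolding in_gap_def
  by (cases "collapsed k") auto

lemma ds_le_eig: assumes "0 < k" "k \<le> length ds" shows "ds ! (k - 1) \<le> eig k t"
proof (cases "collapsed k")
  case True
  thus ?thesis by (simp add: eig_collapsed collapsed_def)
next
  case False
  thus ?thesis using eig_in_gap(1)[OF assms(2) False, of t] assms unfolding in_gap_def by auto
qed

lemma eig_le_eig: assumes "i < k" "k < N" shows "eig i t1 \<le> eig k t2"
proof -
  have "eig i t1 \<le> ds ! i" using eig_le_ds assms length_ds by auto
  also have "\<dots> \<le> ds ! (k - 1)" using assms length_ds by (intro sorted_nth_mono[OF sorted_ds]) auto
  also have "\<dots> \<le> eig k t2" using ds_le_eig assms length_ds by auto
  finally show ?thesis .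
qed

lemma length_eig_list [simp]: "length (eig_list t) = N"
  by (simp add: eig_list_def)

lemma nth_eig_list: "k < N \<Longrightarrow> eig_list t ! k = eig k t"
  by (simp add: eig_list_def)

lemma sorted_eig_list: "sorted (eig_list t)"
  unfolding sorted_iff_nth_Suc by (simp add: nth_eig_list eig_le_eig)

lemma eig_image:
  assumes "k < N" "0 \<le> T"
  shows "eig k ` {-T..T} = {eig k (-T) .. eig k T}"
proof (cases "collapsed k")
  case True
  thus ?thesis using assms by (simp add: eig_collapsed image_constant_conv)
next
  case False
  have k: "k \<le> length ds" using assms length_ds by auto
  show ?thesis
  proof
    show "eig k ` {-T..T} \<subseteq> {eig k (-T) .. eig k T}" using eig_mono[OF k] by auto
    show "{eig k (-T) .. eig k T} \<subseteq> eig k ` {-T..T}"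
    proof
      fix y assume y: "y \<in> {eig k (-T) .. eig k T}"
      have y_gap: "in_gap k y"
        using in_gap_between[OF eig_in_gap(1)[OF k False] eig_in_gap(1)[OF k False]] y by auto
      have "secular y \<in> {-T..T}"
        using secular_le_iff_on_gap[OF eig_in_gap(1)[OF k False] y_gap k]
          secular_le_iff_on_gap[OF y_gap eig_in_gap(1)[OF k False] k] y eig_in_gap(2)[OF k False]
        by auto
      moreover have "eig k (secular y) = y" using eig_eqI[OF k False y_gap refl] .
      ultimately show "y \<in> eig k ` {-T..T}" by force
    qed
  qed
qed

definition root_factor :: "real \<Rightarrow> complex poly" where
  "root_factor x = [:- complex_of_real x, 1:]"

definition diag_poly :: "complex poly" where
  "diag_poly = (\<Prod>j\<in>J. root_factor (a j))"

definition secular_poly :: "real \<Rightarrow> complex poly" where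
  "secular_poly t = root_factor (c + t) * diag_poly - Polynomial.smult (complex_of_real (1 / \<xi>)) (pderiv diag_poly)"

lemma poly_root_factor [simp]: "poly (root_factor x) z = z - complex_of_real x"
  by (simp add: root_factor_def)

lemma root_factor_nonzero [simp]: "root_factor x \<noteq> 0"
  and degree_root_factor [simp]: "degree (root_factor x) = 1"
  and coeff_root_factor_1 [simp]: "coeff (root_factor x) (Suc 0) = 1"
  by (auto simp: root_factor_def)

lemma pderiv_root_factor [simp]: "pderiv (root_factor x) = 1"
  by (simp add: root_factor_def pderiv_pCons)

lemma degree_diag_poly: "degree diag_poly = N - 1"
  unfolding diag_poly_def by (subst degree_prod_eq_sum_degree) (auto simp: card_J)

lemma lead_coeff_diag_poly: "lead_coeff diag_poly = 1"
  unfolding diag_poly_def by (simp add: lead_coeff_prod)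

lemma degree_secular_poly: "degree (secular_poly t) = N"
  and lead_coeff_secular_poly: "lead_coeff (secular_poly t) = 1"
proof -
  let ?A = "root_factor (c + t) * diag_poly"
  let ?B = "- Polynomial.smult (complex_of_real (1 / \<xi>)) (pderiv diag_poly)"
  have "diag_poly \<noteq> 0" using lead_coeff_diag_poly by auto
  hence A: "degree ?A = N" "lead_coeff ?A = 1"
    using two_le_N lead_coeff_mult[of "root_factor (c + t)" diag_poly]
      degree_diag_poly lead_coeff_diag_poly[unfolded degree_diag_poly]
    by (auto simp: degree_mult_eq)
  have B: "degree ?B < N"
    using degree_smult_le[of _ "pderiv diag_poly"] degree_pderiv[of diag_poly] degree_diag_poly two_le_N
    by simp
  have eq: "secular_poly t = ?A + ?B" unfolding secular_poly_def by simp
  show d: "degree (secular_poly t) = N" unfolding eq using A B by (subst degree_add_eq_left) auto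
  have "coeff ?B N = 0" using B by (intro coeff_eq_0) auto
  thus "lead_coeff (secular_poly t) = 1" unfolding d unfolding eq coeff_add using A by simp
qed

lemma secular_poly_nonzero: "secular_poly t \<noteq> 0"
  using lead_coeff_secular_poly[of t] by auto

lemma poly_secular_poly:
  assumes "z \<notin> complex_of_real ` a ` J"
  shows "poly (secular_poly t) z = (\<Prod>j\<in>J. z - complex_of_real (a j)) *
     (z - complex_of_real (c + t) - (\<Sum>j\<in>J. complex_of_real (1 / \<xi>) / (z - complex_of_real (a j))))"
proof -
  have "poly (pderiv diag_poly) z = (\<Sum>j\<in>J. \<Prod>i\<in>J - {j}. z - complex_of_real (a i))"
    unfolding diag_poly_def pderiv_prod by (simp add: poly_sum poly_prod)
  also have "\<dots> = (\<Prod>i\<in>J. z - complex_of_real (a i)) * (\<Sum>j\<in>J. 1 / (z - complex_of_real (a j)))"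
    unfolding sum_distrib_left
  proof (rule sum.cong[OF refl])
    fix j assume j: "j \<in> J"
    have "z - complex_of_real (a j) \<noteq> 0" using assms j by auto
    thus "(\<Prod>i\<in>J - {j}. z - complex_of_real (a i)) =
        (\<Prod>i\<in>J. z - complex_of_real (a i)) * (1 / (z - complex_of_real (a j)))"
      using j by (simp add: prod.remove)
  qed
  finally have "poly (pderiv diag_poly) z =
      (\<Prod>i\<in>J. z - complex_of_real (a i)) * (\<Sum>j\<in>J. 1 / (z - complex_of_real (a j)))" .
  moreover have "poly diag_poly z = (\<Prod>j\<in>J. z - complex_of_real (a j))"
    by (simp add: diag_poly_def poly_prod)
  moreover have "(\<Sum>j\<in>J. complex_of_real (1 / \<xi>) / (z - complex_of_real (a j))) =
      complex_of_real (1 / \<xi>) * (\<Sum>j\<in>J. 1 / (z - complex_of_real (a j)))"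
    by (simp add: sum_distrib_left)
  ultimately show ?thesis unfolding secular_poly_def by (simp add: algebra_simps)
qed

lemma poly_secular_poly_of_real:
  assumes "y \<notin> a ` J"
  shows "poly (secular_poly t) (complex_of_real y) = complex_of_real ((\<Prod>j\<in>J. y - a j) * (secular y - t))"
proof -
  have "complex_of_real y \<notin> complex_of_real ` a ` J" using assms by (auto simp: inj_image_mem_iff)
  moreover have "(\<Sum>j\<in>J. complex_of_real (1 / \<xi>) / (complex_of_real y - complex_of_real (a j))) =
      complex_of_real ((\<Sum>j\<in>J. 1 / (y - a j)) / \<xi>)"
    by (simp add: sum_divide_distrib mult.commute)
  ultimately show ?thesis
    using poly_secular_poly[of "complex_of_real y" t] unfolding secular_def by (simp add: algebra_simps)
qed

lemma order_secular_poly: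
  assumes "z \<in> a ` J"
  shows "order (complex_of_real z) (secular_poly t) = card {j\<in>J. a j = z} - 1"
proof -
  define K where "K = {j\<in>J. a j = z}"
  have "0 < card K" using assms unfolding K_def by (auto simp: card_gt_0_iff)
  then obtain m where m: "card K = Suc m" using gr0_implies_Suc by blast
  define S where "S = (\<Prod>j\<in>J - K. root_factor (a j))"
  have "diag_poly = (\<Prod>j\<in>K. root_factor (a j)) * S" unfolding diag_poly_def S_def
    by (subst prod.subset_diff[of K J]) (auto simp: K_def mult.commute)
  also have "(\<Prod>j\<in>K. root_factor (a j)) = root_factor z ^ Suc m"
    using m by (simp add: K_def)
  finally have diag: "diag_poly = root_factor z ^ Suc m * S" .
  have S_z: "poly S (complex_of_real z) \<noteq> 0"
    unfolding S_def by (auto simp: poly_prod K_def)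
  define W where "W = root_factor (c + t) * root_factor z * S - Polynomial.smult (complex_of_real (1 / \<xi>))
      (root_factor z * pderiv S + Polynomial.smult (of_nat (Suc m)) S)"
  have "pderiv diag_poly = root_factor z ^ Suc m * pderiv S + S * Polynomial.smult (of_nat (Suc m)) (root_factor z ^ m)"
    unfolding diag pderiv_mult pderiv_power_Suc by simp
  hence factor: "secular_poly t = root_factor z ^ m * W" unfolding secular_poly_def W_def diag
    by (simp add: algebra_simps smult_add_right mult_smult_left mult_smult_right power_Suc)
  have "poly W (complex_of_real z) = - (complex_of_real (1 / \<xi>) * (of_nat (Suc m) * poly S (complex_of_real z)))"
    unfolding W_def by simp
  hence W_z: "poly W (complex_of_real z) \<noteq> 0" using S_z \<xi>_pos by (simp del: of_nat_Suc)
  have "order (complex_of_real z) (secular_poly t) = order (complex_of_real z) (root_factor z ^ m) + order (complex_of_real z) W"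
    unfolding factor by (rule order_mult) (use secular_poly_nonzero factor in metis)
  also have "\<dots> = m" using W_z by (simp add: root_factor_def order_power_n_n order_0I)
  finally show ?thesis using m unfolding K_def by simp
qed

lemma in_gap_unique:
  assumes "in_gap k1 y" "in_gap k2 y" "k1 \<le> length ds" "k2 \<le> length ds"
  shows "k1 = k2"
proof (rule ccontr)
  assume "k1 \<noteq> k2"
  then obtain i k where ik: "i < k" "k \<le> length ds" "in_gap i y" "in_gap k y"
    using assms by (metis linorder_neqE_nat)
  hence "ds ! i \<le> ds ! (k - 1)" by (intro sorted_nth_mono[OF sorted_ds]) auto
  thus False using ik unfolding in_gap_def by auto
qed

lemma collapsed_if_eig_eq_diag:
  assumes "y \<in> a ` J" "k < N" "eig k t = y"
  shows "collapsed k"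
proof (rule ccontr)
  assume "\<not> collapsed k"
  hence "in_gap k y" using eig_in_gap(1)[of k t] assms length_ds by auto
  thus False using in_gap_not_diag assms length_ds by fastforce
qed

lemma card_eig_eq_diag:
  assumes "y \<in> a ` J"
  shows "card {k. k < N \<and> eig k t = y} \<le> card {j\<in>J. a j = y} - 1"
proof -
  define I where "I = {i. i < length ds \<and> ds ! i = y}"
  have fin: "finite I" unfolding I_def by auto
  have "{k. k < N \<and> eig k t = y} \<subseteq> I - {Min I}"
  proof
    fix k assume "k \<in> {k. k < N \<and> eig k t = y}"
    hence k: "k < N" "eig k t = y" by auto
    have "collapsed k" by (rule collapsed_if_eig_eq_diag[OF assms k(1,2)])
    hence "k \<in> I" "k - 1 \<in> I" "0 < k"
      using k eig_collapsed[of k t] unfolding I_def collapsed_def by auto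
    thus "k \<in> I - {Min I}" using Min_le[OF fin \<open>k - 1 \<in> I\<close>] by auto
  qed
  hence "card {k. k < N \<and> eig k t = y} \<le> card (I - {Min I})"
    using fin by (intro card_mono) auto
  also have "\<dots> = card I - 1"
  proof -
    have "I \<noteq> {}" using assms set_ds unfolding I_def by (auto simp: in_set_conv_nth)
    thus ?thesis using card_Diff_singleton[OF Min_in[OF fin]] by simp
  qed
  finally show ?thesis unfolding I_def card_nth_ds_eq .
qed

lemma eig_eq_off_diag:
  assumes "y \<notin> a ` J" "k < N" "eig k t = y"
  shows "{k. k < N \<and> eig k t = y} = {k}" and "secular y = t"
proof -
  have gap: "in_gap i y \<and> secular y = t" if "i < N" "eig i t = y" for i
  proof -
    have "\<not> collapsed i"
      using assms(1) that eig_collapsed[of i t] set_ds unfolding collapsed_def by (metis nth_mem)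
    thus ?thesis using eig_in_gap[of i t] that length_ds by auto
  qed
  show "{k. k < N \<and> eig k t = y} = {k}"
    using gap assms(2,3) in_gap_unique length_ds by fastforce
  show "secular y = t" using gap assms(2,3) by blast
qed

lemma count_eig_list: "count (mset (eig_list t)) y = card {k. k < N \<and> eig k t = y}"
  unfolding count_mset count_list_eq_length_filter length_filter_conv_card
  by (intro arg_cong[where f=card]) (auto simp: nth_eig_list)

lemma count_eig_list_le_order:
  "count (mset (eig_list t)) y \<le> order (complex_of_real y) (secular_poly t)"
proof (cases "y \<in> a ` J")
  case True
  thus ?thesis using card_eig_eq_diag[OF True, of t] order_secular_poly[OF True, of t]
    by (simp add: count_eig_list)
next
  case False
  show ?thesis
  proof (cases "\<exists>k<N. eig k t = y")
    case True
    then obtain k where k: "k < N" "eig k t = y" by blast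
    have "poly (secular_poly t) (complex_of_real y) = 0"
      using poly_secular_poly_of_real[OF False] eig_eq_off_diag(2)[OF False k] by simp
    hence "order (complex_of_real y) (secular_poly t) \<noteq> 0"
      using secular_poly_nonzero order_root by blast
    thus ?thesis using eig_eq_off_diag(1)[OF False k] by (simp add: count_eig_list)
  next
    case False
    hence "{k. k < N \<and> eig k t = y} = {}" by auto
    thus ?thesis unfolding count_eig_list by (metis card.empty le0)
  qed
qed

lemma proots_secular_poly: "proots (secular_poly t) = image_mset complex_of_real (mset (eig_list t))"
proof -
  have inj: "inj complex_of_real" by (simp add: inj_def)
  have "image_mset complex_of_real (mset (eig_list t)) \<subseteq># proots (secular_poly t)"
  proof (rule mset_subset_eqI)
    fix z
    show "count (image_mset complex_of_real (mset (eig_list t))) z \<le> count (proots (secular_poly t)) z"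
    proof (cases "z \<in> range complex_of_real")
      case True
      then obtain y where "z = complex_of_real y" by auto
      thus ?thesis using count_eig_list_le_order[of t y]
        by (simp add: count_image_mset_inj[OF inj] secular_poly_nonzero)
    next
      case False
      hence "count (image_mset complex_of_real (mset (eig_list t))) z = 0"
        by (auto simp: count_eq_zero_iff)
      thus ?thesis by simp
    qed
  qed
  moreover have "size (proots (secular_poly t)) \<le> size (image_mset complex_of_real (mset (eig_list t)))"
    by (simp add: size_proots_complex degree_secular_poly)
  ultimately show ?thesis by (metis mset_subset_size subset_mset.le_less not_le)
qed

lemma Re_proots_secular_poly: "image_mset Re (proots (secular_poly t)) = mset (eig_list t)"
  unfolding proots_secular_poly by (simp add: multiset.map_comp o_def)

lemma count_Re_proots_secular_poly:
  assumes "y \<in> a ` J"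
  shows "count (image_mset Re (proots (secular_poly t))) y = card {j\<in>J. a j = y} - 1"
proof -
  have "inj complex_of_real" by (simp add: inj_def)
  hence "count (mset (eig_list t)) y = count (proots (secular_poly t)) (complex_of_real y)"
    unfolding proots_secular_poly by (simp add: count_image_mset_inj)
  also have "\<dots> = card {j\<in>J. a j = y} - 1"
    using order_secular_poly[OF assms] secular_poly_nonzero by simp
  finally show ?thesis unfolding Re_proots_secular_poly .
qed

lemma coeff_secular_poly_eq_sum_eig:
  "coeff (secular_poly t) (N - 1) = - complex_of_real (\<Sum>k<N. eig k t)"
proof -
  have "secular_poly t = (\<Prod>x\<in>#proots (secular_poly t). [:-x, 1:])"
    using complex_poly_decompose_multiset[of "secular_poly t"] lead_coeff_secular_poly by simp
  moreover have "size (proots (secular_poly t)) = N" "proots (secular_poly t) \<noteq> {#}"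
    using size_proots_complex[of "secular_poly t"] degree_secular_poly two_le_N by auto
  ultimately have "coeff (secular_poly t) (N - 1) = - sum_mset (proots (secular_poly t))"
    using coeff_prod_mset_linear_factors[of "proots (secular_poly t)"] by simp
  also have "sum_mset (proots (secular_poly t)) = complex_of_real (\<Sum>k<N. eig k t)"
    unfolding proots_secular_poly
    by (simp add: eig_list_def multiset.map_comp o_def atLeast0LessThan flip: sum_unfold_sum_mset)
  finally show ?thesis .
qed

lemma sum_eig_diff: "(\<Sum>k<N. eig k t2) - (\<Sum>k<N. eig k t1) = t2 - t1"
proof -
  have "secular_poly t2 - secular_poly t1 = Polynomial.smult (complex_of_real (t1 - t2)) diag_poly"
    unfolding secular_poly_def by (simp add: root_factor_def algebra_simps flip: smult_add_left)
  hence "coeff (secular_poly t2) (N - 1) - coeff (secular_poly t1) (N - 1) = complex_of_real (t1 - t2)"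
    using lead_coeff_diag_poly degree_diag_poly by (metis coeff_diff coeff_smult mult.right_neutral)
  from arg_cong[where f=Re, OF this] show ?thesis unfolding coeff_secular_poly_eq_sum_eig by simp
qed

lemma emeasure_UN_eig_intervals:
  assumes "0 \<le> T"
  shows "emeasure lborel (\<Union>k<N. {eig k (-T)..eig k T}) = ennreal (2 * T)"
proof -
  have "emeasure lborel (\<Union>k<N. {eig k (-T)..eig k T}) = ennreal (\<Sum>k<N. eig k T - eig k (-T))"
    using assms length_ds by (intro emeasure_lborel_UN_ordered_intervals eig_le_eig eig_mono) auto
  also have "(\<Sum>k<N. eig k T - eig k (-T)) = 2 * T"
    using sum_eig_diff[of T "-T"] by (simp add: sum_subtractf)
  finally show ?thesis .
qed

lemma ex_collapsed_iff: "(\<exists>k. collapsed k \<and> ds ! k = y) \<longleftrightarrow> 2 \<le> card {j\<in>J. a j = y}"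
proof -
  define I where "I = {i. i < length ds \<and> ds ! i = y}"
  have fin: "finite I" unfolding I_def by auto
  have "(\<exists>k. collapsed k \<and> ds ! k = y) \<longleftrightarrow> 2 \<le> card I"
  proof
    assume "\<exists>k. collapsed k \<and> ds ! k = y"
    then obtain k where "0 < k" "k < length ds" "ds ! (k - 1) = y" "ds ! k = y"
      unfolding collapsed_def by auto
    hence "{k - 1, k} \<subseteq> I" "card {k - 1, k} = 2" unfolding I_def by auto
    thus "2 \<le> card I" using card_mono[OF fin] by metis
  next
    assume two: "2 \<le> card I"
    hence "I \<noteq> {}" by auto
    define i0 where "i0 = Min I"
    have i0: "i0 \<in> I" using Min_in[OF fin \<open>I \<noteq> {}\<close>] unfolding i0_def .
    obtain i1 where i1: "i1 \<in> I" "i1 \<noteq> i0"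
      using two card_le_Suc0_iff_eq[OF fin] by (metis not_less_eq_eq numeral_2_eq_2)
    hence "i0 < i1" using Min_le[OF fin] unfolding i0_def by fastforce
    hence "ds ! i0 \<le> ds ! Suc i0" "ds ! Suc i0 \<le> ds ! i1"
      using i1 unfolding I_def by (auto intro: sorted_nth_mono[OF sorted_ds])
    hence "ds ! Suc i0 = y" using i0 i1 unfolding I_def by auto
    moreover have "collapsed (Suc i0)"
      using \<open>i0 < i1\<close> i0 i1 calculation unfolding collapsed_def I_def by auto
    ultimately show "\<exists>k. collapsed k \<and> ds ! k = y" by blast
  qed
  thus ?thesis unfolding I_def card_nth_ds_eq .
qed

lemma char_poly_arrowhead:
  fixes M :: "complex mat"
  assumes M: "M \<in> carrier_mat N N"
    and diag_block: "\<And>i j. i < N - 1 \<Longrightarrow> j < N - 1 \<Longrightarrow>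
      M $$ (i,j) = (if i = j then complex_of_real (a (Suc i)) else 0)"
    and last_col: "\<And>i. i < N - 1 \<Longrightarrow> M $$ (i, N - 1) = complex_of_real (- 1 / sqrt \<xi>)"
    and last_row: "\<And>i. i < N - 1 \<Longrightarrow> M $$ (N - 1, i) = complex_of_real (- 1 / sqrt \<xi>)"
    and corner: "M $$ (N - 1, N - 1) = complex_of_real (c + t)"
  shows "char_poly M = secular_poly t"
proof (rule poly_eqI_cofinite[of "complex_of_real ` a ` J"])
  fix z assume z: "z \<notin> complex_of_real ` a ` J"
  define m where "m = N - 1"
  have N: "N = Suc m" using two_le_N unfolding m_def by auto
  define B where "B = - char_matrix M z"
  have B: "B \<in> carrier_mat (Suc m) (Suc m)" unfolding B_def using M N by auto
  have B_entry: "B $$ (i,j) = (if i = j then z else 0) - M $$ (i,j)" if "i < Suc m" "j < Suc m" for i j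
    unfolding B_def char_matrix_def using M N that by auto
  have J: "J = Suc ` {..<m}"
    unfolding J_def m_def lessThan_atLeast0 using two_le_N by simp
  have B_diag: "B $$ (i,i) = z - complex_of_real (a (Suc i))" if "i < m" for i
    using B_entry[of i i] diag_block[of i i] that unfolding m_def by auto
  have B_diag_nz: "B $$ (i,i) \<noteq> 0" if "i < m" for i
    using z that unfolding B_diag[OF that] J by auto
  have B_border: "B $$ (m,i) * B $$ (i,m) = complex_of_real (1 / \<xi>)" if "i < m" for i
  proof -
    have "B $$ (m,i) = complex_of_real (1 / sqrt \<xi>)" "B $$ (i,m) = complex_of_real (1 / sqrt \<xi>)"
      using B_entry[of m i] B_entry[of i m] last_row[of i] last_col[of i] that unfolding m_def by auto
    moreover have "1 / sqrt \<xi> * (1 / sqrt \<xi>) = 1 / \<xi>" using \<xi>_pos by (simp add: real_sqrt_mult[symmetric])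
    ultimately show ?thesis by (metis of_real_mult)
  qed
  have prod_eq: "(\<Prod>i<m. B $$ (i,i)) = (\<Prod>j\<in>J. z - complex_of_real (a j))"
    unfolding J by (simp add: prod.reindex B_diag)
  have corner_eq: "B $$ (m,m) = z - complex_of_real (c + t)"
    using B_entry[of m m] corner unfolding m_def by simp
  have sum_eq: "(\<Sum>i<m. B $$ (m,i) * B $$ (i,m) / B $$ (i,i)) =
      (\<Sum>j\<in>J. complex_of_real (1 / \<xi>) / (z - complex_of_real (a j)))"
    unfolding J by (simp add: sum.reindex B_diag B_border)
  have "poly (char_poly M) z = det B" unfolding B_def by (rule char_poly_matrix[OF M])
  also have "\<dots> = (\<Prod>i<m. B $$ (i,i)) * (B $$ (m,m) - (\<Sum>i<m. B $$ (m,i) * B $$ (i,m) / B $$ (i,i)))"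
    by (rule det_arrowhead[OF B _ B_diag_nz]) (auto simp: B_entry diag_block m_def)
  also have "\<dots> = poly (secular_poly t) z"
    unfolding prod_eq corner_eq sum_eq using poly_secular_poly[OF z] by simp
  finally show "poly (char_poly M) z = poly (secular_poly t) z" .
qed simp

end

section \<open>The graph \<Gamma> and its fiber operators\<close>

lemma sum_mset_filter_image_mset_set:
  "finite S \<Longrightarrow> (\<Sum>e\<in>#filter_mset P (image_mset g (mset_set S)). F e) = (\<Sum>x\<in>{x\<in>S. P (g x)}. F (g x))"
  by (simp add: filter_mset_image_mset filter_mset_mset_set sum_unfold_sum_mset multiset.map_comp o_def)

lemma size_filter_image_mset_set:
  "finite S \<Longrightarrow> size (filter_mset P (image_mset g (mset_set S))) = card {x\<in>S. P (g x)}"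
  by (simp add: filter_mset_image_mset filter_mset_mset_set)

lemma sum_filter_Gam:
  fixes F :: "'d::finite oedge \<Rightarrow> complex"
  shows "(\<Sum>e\<in>#filter_mset P (Gam \<nu> :: 'd oedge multiset). F e) =
    (\<Sum>j\<in>{j\<in>{1..<\<nu>}. P (j, \<nu>, 0)}. F (j, \<nu>, 0)) + (\<Sum>j\<in>{j\<in>{1..<\<nu>}. P (\<nu>, j, 0)}. F (\<nu>, j, 0))
    + (\<Sum>s\<in>{s\<in>UNIV. P (\<nu>, \<nu>, axis s 1)}. F (\<nu>, \<nu>, axis s 1))
    + (\<Sum>s\<in>{s\<in>UNIV. P (\<nu>, \<nu>, - axis s 1)}. F (\<nu>, \<nu>, - axis s 1))"
  unfolding Gam_def by (simp add: sum_mset_filter_image_mset_set)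

lemma size_filter_Gam:
  "size (filter_mset P (Gam \<nu> :: 'd::finite oedge multiset)) =
    card {j\<in>{1..<\<nu>}. P (j, \<nu>, 0)} + card {j\<in>{1..<\<nu>}. P (\<nu>, j, 0)}
    + card {s\<in>(UNIV :: 'd set). P (\<nu>, \<nu>, axis s 1)}
    + card {s\<in>(UNIV :: 'd set). P (\<nu>, \<nu>, - axis s 1)}"
  unfolding Gam_def by (simp add: size_filter_image_mset_set)

lemma kappa_Gam_pendant: "j \<in> {1..<\<nu>} \<Longrightarrow> kappa (Gam \<nu> :: 'd::finite oedge multiset) j = 1"
proof -
  assume j: "j \<in> {1..<\<nu>}"
  hence "{j'\<in>{1..<\<nu>}. j' = j} = {j}" by auto
  thus ?thesis unfolding kappa_def size_filter_Gam using j by (simp add: esrc_def)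
qed

lemma kappa_Gam_center: "kappa (Gam \<nu> :: 'd::finite oedge multiset) \<nu> = \<nu> - 1 + 2 * CARD('d)"
proof -
  have "{j. j = \<nu> \<and> Suc 0 \<le> j \<and> j < \<nu>} = {}" "{j. Suc 0 \<le> j \<and> j < \<nu>} = {1..<\<nu>}" by auto
  thus ?thesis unfolding kappa_def size_filter_Gam by (simp add: esrc_def)
qed

lemma pair_idx_axis:
  fixes \<theta> :: "real ^ 'd::finite"
  shows "pair_idx (axis s (1::int)) \<theta> = \<theta> $ s" "pair_idx (- axis s (1::int)) \<theta> = - \<theta> $ s"
    "pair_idx (0::int^'d) \<theta> = 0"
proof -
  have "real_of_int (axis s (1::int) $ i) * \<theta> $ i = (if i = s then \<theta> $ i else 0)"
    "real_of_int ((- axis s (1::int)) $ i) * \<theta> $ i = (if i = s then - \<theta> $ i else 0)" for i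
    by (simp_all add: axis_def)
  thus "pair_idx (axis s (1::int)) \<theta> = \<theta> $ s" "pair_idx (- axis s (1::int)) \<theta> = - \<theta> $ s"
    "pair_idx (0::int^'d) \<theta> = 0"
    unfolding pair_idx_def by simp_all
qed

lemma sum_cis_loops_Gam:
  fixes \<theta> :: "real ^ 'd::finite"
  shows "(\<Sum>e\<in>#filter_mset (\<lambda>e. esrc e = \<nu> \<and> etgt e = \<nu>) (Gam \<nu> :: 'd oedge multiset).
      cis (pair_idx (eidx e) \<theta>)) = complex_of_real (2 * (\<Sum>s\<in>UNIV. cos (\<theta> $ s)))"
proof -
  have "(\<Sum>e\<in>#filter_mset (\<lambda>e. esrc e = \<nu> \<and> etgt e = \<nu>) (Gam \<nu> :: 'd oedge multiset).
      cis (pair_idx (eidx e) \<theta>)) = (\<Sum>s\<in>UNIV. cis (\<theta> $ s) + cis (- \<theta> $ s))"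
    unfolding sum_filter_Gam by (simp add: esrc_def etgt_def eidx_def pair_idx_axis sum.distrib)
  also have "\<dots> = complex_of_real (2 * (\<Sum>s\<in>UNIV. cos (\<theta> $ s)))"
    by (simp add: complex_eq_iff sum_distrib_left)
  finally show ?thesis .
qed

lemma exact_loop_graph_Gam: "exact_loop_graph (Gam \<nu> :: 'd::finite oedge multiset) theta_pi"
  unfolding exact_loop_graph_def loop_graph_def
proof (intro conjI ballI impI)
  fix e assume e: "e \<in># (Gam \<nu> :: 'd oedge multiset)" and "bridge e"
  from \<open>bridge e\<close> have "eidx e \<noteq> 0" by (simp add: bridge_def)
  with e obtain s where "e = (\<nu>, \<nu>, axis s 1) \<or> e = (\<nu>, \<nu>, - axis s 1)"
    unfolding Gam_def by (auto simp: eidx_def)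
  thus "esrc e = etgt e" "cos (pair_idx (eidx e) theta_pi) = -1"
    by (auto simp: esrc_def etgt_def eidx_def pair_idx_axis theta_pi_def)
qed

lemma spec_eq_spec_ac_Un_spec_fb: "spec N A Q = spec_ac N A Q \<union> spec_fb N A Q"
proof (intro equalityI subsetI)
  fix x assume "x \<in> spec N A Q"
  then obtain n where "n \<in> {1..N}" "x \<in> band N A Q n" unfolding spec_def by blast
  thus "x \<in> spec_ac N A Q \<union> spec_fb N A Q"
    unfolding spec_ac_def spec_fb_def degenerate_band_def
    by (cases "\<exists>c. band N A Q n = {c}") auto
next
  fix x assume "x \<in> spec_ac N A Q \<union> spec_fb N A Q"
  thus "x \<in> spec N A Q" unfolding spec_ac_def spec_fb_def spec_def by auto
qed

locale pendant_fiber =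
  fixes \<nu> d :: nat and G :: "'d::finite oedge multiset" and Q :: "nat \<Rightarrow> real"
  assumes two_le_\<nu>: "2 \<le> \<nu>" and G_eq: "G = Gam \<nu>" and card_d: "CARD('d) = d"
begin

definition \<xi> :: real where "\<xi> = real (\<nu> - 1 + 2 * d)"

definition T :: real where "T = 2 * real d / \<xi>"

definition loop_shift :: "real ^ 'd \<Rightarrow> real" where
  "loop_shift \<theta> = - 2 * (\<Sum>s\<in>UNIV. cos (\<theta> $ s)) / \<xi>"

sublocale A: arrowhead \<nu> "\<lambda>j. 1 + Q j" "1 + Q \<nu>" \<xi>
  using two_le_\<nu> by unfold_locales (auto simp: \<xi>_def)

lemma d_pos: "0 < d"
  using card_d[symmetric] by simp

lemma T_pos: "0 < T"
  using A.\<xi>_pos d_pos by (simp add: T_def)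

lemma T_less_1: "T < 1"
  using two_le_\<nu> by (simp add: T_def \<xi>_def)

lemma fiber_mat_Gam:
  fixes \<theta> :: "real ^ 'd"
  defines "M \<equiv> fiber_mat \<nu> G Q \<theta>"
  shows "M \<in> carrier_mat \<nu> \<nu>"
    and "\<And>i j. i < \<nu> - 1 \<Longrightarrow> j < \<nu> - 1 \<Longrightarrow> M $$ (i,j) = (if i = j then complex_of_real (1 + Q (Suc i)) else 0)"
    and "\<And>i. i < \<nu> - 1 \<Longrightarrow> M $$ (i, \<nu> - 1) = complex_of_real (- 1 / sqrt \<xi>)"
    and "\<And>i. i < \<nu> - 1 \<Longrightarrow> M $$ (\<nu> - 1, i) = complex_of_real (- 1 / sqrt \<xi>)"
    and "M $$ (\<nu> - 1, \<nu> - 1) = complex_of_real (1 + Q \<nu> + loop_shift \<theta>)"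
proof -
  have M: "M $$ (i,j) = fiber_entry G Q \<theta> (Suc i) (Suc j)" if "i < \<nu>" "j < \<nu>" for i j
    unfolding M_def fiber_mat_def using that by simp
  have \<kappa>: "real (kappa G \<nu>) = \<xi>" "\<And>j. j \<in> {1..<\<nu>} \<Longrightarrow> kappa G j = 1"
    unfolding G_eq \<xi>_def by (simp_all add: kappa_Gam_center kappa_Gam_pendant card_d)
  show "M \<in> carrier_mat \<nu> \<nu>" unfolding M_def fiber_mat_def by simp
  show "M $$ (i,j) = (if i = j then complex_of_real (1 + Q (Suc i)) else 0)"
    if "i < \<nu> - 1" "j < \<nu> - 1" for i j
  proof -
    have "\<nu> \<noteq> Suc i" "\<nu> \<noteq> Suc j" using that by auto
    hence "(\<Sum>e\<in>#filter_mset (\<lambda>e. esrc e = Suc i \<and> etgt e = Suc j) G. cis (pair_idx (eidx e) \<theta>)) = 0"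
      unfolding G_eq sum_filter_Gam by (simp add: esrc_def etgt_def)
    thus ?thesis using that M[of i j] unfolding fiber_entry_def by auto
  qed
  show "M $$ (i, \<nu> - 1) = complex_of_real (- 1 / sqrt \<xi>)" if "i < \<nu> - 1" for i
  proof -
    have "{j\<in>{1..<\<nu>}. esrc (j, \<nu>, 0::int^'d) = Suc i \<and> etgt (j, \<nu>, 0::int^'d) = \<nu>} = {Suc i}"
      using that by (auto simp: esrc_def etgt_def)
    thus ?thesis using that M[of i "\<nu> - 1"] \<kappa>
      unfolding fiber_entry_def G_eq sum_filter_Gam by (simp add: esrc_def etgt_def eidx_def pair_idx_axis)
  qed
  show "M $$ (\<nu> - 1, i) = complex_of_real (- 1 / sqrt \<xi>)" if "i < \<nu> - 1" for i
  proof -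
    have "{j\<in>{1..<\<nu>}. esrc (\<nu>, j, 0::int^'d) = \<nu> \<and> etgt (\<nu>, j, 0::int^'d) = Suc i} = {Suc i}"
      using that by (auto simp: esrc_def etgt_def)
    thus ?thesis using that M[of "\<nu> - 1" i] \<kappa> two_le_\<nu>
      unfolding fiber_entry_def G_eq sum_filter_Gam by (simp add: esrc_def etgt_def eidx_def pair_idx_axis)
  qed
  have "M $$ (\<nu> - 1, \<nu> - 1) = fiber_entry G Q \<theta> \<nu> \<nu>" using M[of "\<nu> - 1" "\<nu> - 1"] two_le_\<nu> by simp
  also have "\<dots> = 1 + complex_of_real (Q \<nu>) - complex_of_real (2 * (\<Sum>s\<in>UNIV. cos (\<theta> $ s))) / complex_of_real \<xi>"
    unfolding fiber_entry_def G_eq sum_cis_loops_Gam \<kappa>(1)[unfolded G_eq] using A.\<xi>_pos by simp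
  also have "\<dots> = complex_of_real (1 + Q \<nu> + loop_shift \<theta>)"
    unfolding loop_shift_def by (simp add: field_simps)
  finally show "M $$ (\<nu> - 1, \<nu> - 1) = complex_of_real (1 + Q \<nu> + loop_shift \<theta>)" .
qed

lemma char_poly_fiber_mat: "char_poly (fiber_mat \<nu> G Q \<theta>) = A.secular_poly (loop_shift \<theta>)"
  by (rule A.char_poly_arrowhead) (use fiber_mat_Gam in \<open>simp_all add: algebra_simps\<close>)

lemma fiber_eigs_eq: "fiber_eigs \<nu> G Q \<theta> = image_mset Re (proots (A.secular_poly (loop_shift \<theta>)))"
  unfolding fiber_eigs_def char_poly_fiber_mat ..

lemma lam_eq: "1 \<le> n \<Longrightarrow> n \<le> \<nu> \<Longrightarrow> lam \<nu> G Q \<theta> n = A.eig (n - 1) (loop_shift \<theta>)"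
  unfolding lam_def fiber_eigs_eq A.Re_proots_secular_poly
  by (simp add: sorted_sort_id A.sorted_eig_list A.nth_eig_list)

lemma range_loop_shift: "range loop_shift = {-T..T}"
proof
  show "range loop_shift \<subseteq> {-T..T}"
  proof
    fix x assume "x \<in> range loop_shift"
    then obtain \<theta> where x: "x = loop_shift \<theta>" by auto
    have "\<bar>\<Sum>s\<in>UNIV. cos (\<theta> $ s)\<bar> \<le> (\<Sum>s\<in>(UNIV::'d set). 1)"
      by (rule order_trans[OF sum_abs]) (intro sum_mono, simp)
    hence "\<bar>\<Sum>s\<in>UNIV. cos (\<theta> $ s)\<bar> \<le> d" using card_d by simp
    hence "\<bar>x\<bar> \<le> T" unfolding x loop_shift_def T_def using A.\<xi>_pos
      by (simp add: abs_mult abs_divide divide_right_mono)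
    thus "x \<in> {-T..T}" by auto
  qed
  show "{-T..T} \<subseteq> range loop_shift"
  proof
    fix x assume "x \<in> {-T..T}"
    hence w: "-1 \<le> - x / T" "- x / T \<le> 1" using T_pos by (auto simp: field_simps)
    have "loop_shift (\<chi> s. arccos (- x / T)) = x"
      unfolding loop_shift_def using w T_pos A.\<xi>_pos card_d by (simp add: cos_arccos T_def field_simps)
    thus "x \<in> range loop_shift" by (metis rangeI)
  qed
qed

lemma loop_shift_0: "loop_shift 0 = - T"
  by (simp add: loop_shift_def T_def card_d)

lemma loop_shift_theta_pi: "loop_shift theta_pi = T"
  by (simp add: loop_shift_def T_def card_d theta_pi_def)

lemma band_eq: "1 \<le> n \<Longrightarrow> n \<le> \<nu> \<Longrightarrow> band \<nu> G Q n = {A.eig (n - 1) (-T) .. A.eig (n - 1) T}"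
  using A.eig_image[of "n - 1" T] T_pos
  by (simp add: band_def lam_eq image_image range_loop_shift[symmetric])

lemma degenerate_band_iff:
  assumes "1 \<le> n" "n \<le> \<nu>"
  shows "degenerate_band \<nu> G Q n \<longleftrightarrow> A.collapsed (n - 1)"
proof
  assume "A.collapsed (n - 1)"
  thus "degenerate_band \<nu> G Q n"
    unfolding degenerate_band_def band_eq[OF assms] by (simp add: A.eig_collapsed)
next
  assume "degenerate_band \<nu> G Q n"
  then obtain c where "{A.eig (n - 1) (-T) .. A.eig (n - 1) T} = {c}"
    unfolding degenerate_band_def band_eq[OF assms] by blast
  hence "\<not> A.eig (n - 1) (-T) < A.eig (n - 1) T"
    by (metis atLeastAtMost_singleton_iff order_less_irrefl)
  thus "A.collapsed (n - 1)" using A.eig_strict_mono[of "n - 1" "-T" T] A.length_ds assms T_pos by force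
qed

lemma band_collapsed:
  "1 \<le> n \<Longrightarrow> n \<le> \<nu> \<Longrightarrow> A.collapsed (n - 1) \<Longrightarrow> band \<nu> G Q n = {A.ds ! (n - 1)}"
  by (simp add: band_eq A.eig_collapsed)

lemma spec_eq_UN_bands: "spec \<nu> G Q = (\<Union>k<\<nu>. {A.eig k (-T) .. A.eig k T})"
proof -
  have "spec \<nu> G Q = (\<Union>n\<in>Suc ` {..<\<nu>}. band \<nu> G Q n)"
    unfolding spec_def by (simp add: lessThan_atLeast0 atLeastLessThanSuc_atLeastAtMost)
  also have "\<dots> = (\<Union>k<\<nu>. {A.eig k (-T) .. A.eig k T})"
    by (simp add: band_eq)
  finally show ?thesis .
qed

lemma spec_eq_UN_lam_intervals:
  "spec \<nu> G Q = (\<Union>n\<in>{1..\<nu>}. {lam \<nu> G Q 0 n .. lam \<nu> G Q theta_pi n})"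
  unfolding spec_def by (intro SUP_cong) (auto simp: band_eq lam_eq loop_shift_0 loop_shift_theta_pi)

lemma emeasure_spec: "emeasure lborel (spec \<nu> G Q) = ennreal (4 * d / \<xi>)"
  using A.emeasure_UN_eig_intervals[of T] T_pos by (simp add: spec_eq_UN_bands T_def)

lemma count_fiber_eigs:
  assumes "j \<in> {1..<\<nu>}"
  shows "count (fiber_eigs \<nu> G Q \<theta>) (1 + Q j) = card {i\<in>{1..<\<nu>}. Q i = Q j} - 1"
  using A.count_Re_proots_secular_poly[of "1 + Q j"] assms
  by (simp add: fiber_eigs_eq A.J_def)

lemma no_flat_bands_if_inj:
  assumes "inj_on Q {1..<\<nu>}"
  shows "spec \<nu> G Q = spec_ac \<nu> G Q" and "spec_fb \<nu> G Q = {}"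
proof -
  have card_le: "card {j\<in>A.J. 1 + Q j = y} \<le> 1" for y
    unfolding One_nat_def using assms by (subst card_le_Suc0_iff_eq) (auto simp: A.J_def inj_on_def)
  have "\<not> A.collapsed k" for k
  proof
    assume "A.collapsed k"
    hence "2 \<le> card {j\<in>A.J. 1 + Q j = A.ds ! k}" using A.ex_collapsed_iff by blast
    thus False using card_le[of "A.ds ! k"] by simp
  qed
  hence nd: "\<not> degenerate_band \<nu> G Q n" if "n \<in> {1..\<nu>}" for n
    using degenerate_band_iff that by auto
  thus "spec_fb \<nu> G Q = {}" unfolding spec_fb_def degenerate_band_def by blast
  show "spec \<nu> G Q = spec_ac \<nu> G Q" unfolding spec_def spec_ac_def using nd by auto
qed

lemma flat_band_of_repeated_value:
  assumes "2 \<le> m" "card {j\<in>{1..<\<nu>}. Q j = q} = m"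
  shows "q + 1 \<in> spec_fb \<nu> G Q" and "fb_multiplicity \<nu> G Q (q + 1) (m - 1)"
proof -
  have card_eq: "card {j\<in>A.J. 1 + Q j = q + 1} = m" using assms(2) by (simp add: A.J_def add.commute)
  then obtain k where k: "A.collapsed k" "A.ds ! k = q + 1" using assms(1) A.ex_collapsed_iff by metis
  hence "k < \<nu> - 1" using A.length_ds unfolding A.collapsed_def by simp
  hence "band \<nu> G Q (Suc k) = {q + 1}" "Suc k \<in> {1..\<nu>}" using band_collapsed[of "Suc k"] k by auto
  thus "q + 1 \<in> spec_fb \<nu> G Q" unfolding spec_fb_def by blast
  have "0 < card {j\<in>{1..<\<nu>}. Q j = q}" using assms by simp
  then obtain j where "j \<in> {1..<\<nu>}" "Q j = q" by (auto simp: card_gt_0_iff)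
  thus "fb_multiplicity \<nu> G Q (q + 1) (m - 1)"
    unfolding fb_multiplicity_def using count_fiber_eigs assms(2) by (auto simp: add.commute)
qed

lemma laplacian_secular:
  assumes "Q = (\<lambda>_. 0)"
  shows "A.secular y = y - 1 - real (\<nu> - 1) / (\<xi> * (y - 1))"
  unfolding A.secular_def by (simp add: assms A.card_J)

lemma laplacian_band_edges:
  assumes "Q = (\<lambda>_. 0)"
  shows "A.eig 0 (-T) = 0" "A.eig 0 T = T" "A.eig (\<nu> - 1) (-T) = 2 - T" "A.eig (\<nu> - 1) T = 2"
proof -
  have ds: "A.ds ! i = 1" if "i < \<nu> - 1" for i
    using that A.length_ds nth_mem[of i A.ds] A.set_ds assms by auto
  have gap0: "A.in_gap 0 y \<longleftrightarrow> y < 1" and gap_last: "A.in_gap (\<nu> - Suc 0) y \<longleftrightarrow> 1 < y" for y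
    using ds[of 0] ds[of "\<nu> - 2"] two_le_\<nu> A.length_ds unfolding A.in_gap_def
    by (auto simp: numeral_2_eq_2 Suc_diff_Suc)
  have nc: "\<not> A.collapsed 0" "\<not> A.collapsed (\<nu> - 1)" using A.length_ds unfolding A.collapsed_def by auto
  have k_le: "0 \<le> length A.ds" "\<nu> - 1 \<le> length A.ds" using A.length_ds by auto
  have \<xi>_eq: "\<xi> = real (\<nu> - 1) + 2 * d" unfolding \<xi>_def by simp
  have T1: "T - 1 = - real (\<nu> - 1) / \<xi>" using A.\<xi>_pos unfolding T_def \<xi>_eq by (simp add: field_simps)
  have r_pos: "0 < real (\<nu> - 1)" using two_le_\<nu> by simp
  show "A.eig 0 (-T) = 0" using T1 A.\<xi>_pos
    by (intro A.eig_eqI[OF k_le(1) nc(1)]) (auto simp: gap0 laplacian_secular[OF assms] field_simps)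
  show "A.eig 0 T = T" using T1 A.\<xi>_pos T_less_1 r_pos
    by (intro A.eig_eqI[OF k_le(1) nc(1)]) (auto simp: gap0 laplacian_secular[OF assms] field_simps)
  show "A.eig (\<nu> - 1) (-T) = 2 - T" using T1 A.\<xi>_pos T_less_1 r_pos
    by (intro A.eig_eqI[OF k_le(2) nc(2)]) (auto simp: gap_last laplacian_secular[OF assms] field_simps)
  show "A.eig (\<nu> - 1) T = 2" using T1 A.\<xi>_pos
    by (intro A.eig_eqI[OF k_le(2) nc(2)]) (auto simp: gap_last laplacian_secular[OF assms] field_simps)
qed

lemma laplacian_spectrum:
  assumes "Q = (\<lambda>_. 0)"
  shows "spec_fb \<nu> G Q = (if \<nu> \<ge> 3 then {1} else {})"
    and "fb_multiplicity \<nu> G Q 1 (\<nu> - 2)"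
    and "spec_ac \<nu> G Q = band \<nu> G Q 1 \<union> band \<nu> G Q \<nu>"
    and "band \<nu> G Q 1 = {0 .. T}"
    and "band \<nu> G Q \<nu> = {2 - T .. 2}"
proof -
  have ds: "A.ds ! i = 1" if "i < \<nu> - 1" for i
    using that A.length_ds nth_mem[of i A.ds] A.set_ds assms by auto
  have deg: "degenerate_band \<nu> G Q n \<longleftrightarrow> 2 \<le> n \<and> n < \<nu>" if "n \<in> {1..\<nu>}" for n
    using that degenerate_band_iff[of n] ds[of "n - 1"] ds[of "n - 2"] A.length_ds
    unfolding A.collapsed_def by (auto simp: numeral_2_eq_2)
  have flat: "band \<nu> G Q n = {1}" if "2 \<le> n" "n < \<nu>" for n
    using that deg[of n] band_collapsed[of n] ds[of "n - 1"] degenerate_band_iff[of n] by auto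
  show "band \<nu> G Q 1 = {0 .. T}" "band \<nu> G Q \<nu> = {2 - T .. 2}"
    using band_eq[of 1] band_eq[of \<nu>] laplacian_band_edges[OF assms] two_le_\<nu> by auto
  show "spec_fb \<nu> G Q = (if \<nu> \<ge> 3 then {1} else {})"
  proof (intro equalityI subsetI)
    fix c assume "c \<in> spec_fb \<nu> G Q"
    then obtain n where n: "n \<in> {1..\<nu>}" "band \<nu> G Q n = {c}" unfolding spec_fb_def by blast
    hence "2 \<le> n" "n < \<nu>" using deg[OF n(1)] unfolding degenerate_band_def by auto
    thus "c \<in> (if \<nu> \<ge> 3 then {1} else {})" using flat n(2) by auto
  next
    fix c assume "c \<in> (if \<nu> \<ge> 3 then {1::real} else {})"
    hence "band \<nu> G Q 2 = {c}" "2 \<in> {1..\<nu>}" using flat[of 2] by (auto split: if_splits)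
    thus "c \<in> spec_fb \<nu> G Q" unfolding spec_fb_def by blast
  qed
  have "{i. Suc 0 \<le> i \<and> i < \<nu>} = {1..<\<nu>}" by auto
  hence "count (fiber_eigs \<nu> G Q \<theta>) 1 = \<nu> - 2" for \<theta>
    using count_fiber_eigs[of 1 \<theta>] two_le_\<nu> assms by simp
  thus "fb_multiplicity \<nu> G Q 1 (\<nu> - 2)" unfolding fb_multiplicity_def by simp
  have "{n\<in>{1..\<nu>}. \<not> degenerate_band \<nu> G Q n} = {1, \<nu>}" using deg two_le_\<nu> by auto
  thus "spec_ac \<nu> G Q = band \<nu> G Q 1 \<union> band \<nu> G Q \<nu>" unfolding spec_ac_def by simp
qed

end

theorem proposition6p1:
  fixes \<nu> :: nat
  assumes d2: "CARD('d::finite) \<ge> 2"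
      and nu2: "\<nu> \<ge> 2"
  defines "\<xi> \<equiv> real (\<nu> - 1 + 2 * CARD('d))"
  defines "G \<equiv> (Gam \<nu> :: 'd oedge multiset)"
  shows
    "exact_loop_graph G (theta_pi :: real ^ 'd)
     \<and>
     \<comment> \<open>(i): Laplacian, Q = 0\<close>
     (spec \<nu> G (\<lambda>_. 0) = spec_ac \<nu> G (\<lambda>_. 0) \<union> spec_fb \<nu> G (\<lambda>_. 0)
      \<and> spec_fb \<nu> G (\<lambda>_. 0) = (if \<nu> \<ge> 3 then {1} else {})
      \<and> fb_multiplicity \<nu> G (\<lambda>_. 0) 1 (\<nu> - 2)
      \<and> spec_ac \<nu> G (\<lambda>_. 0) = band \<nu> G (\<lambda>_. 0) 1 \<union> band \<nu> G (\<lambda>_. 0) \<nu>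
      \<and> band \<nu> G (\<lambda>_. 0) 1 = {0 .. 2 * CARD('d) / \<xi>}
      \<and> band \<nu> G (\<lambda>_. 0) \<nu> = {2 - 2 * CARD('d) / \<xi> .. 2})
     \<and>
     \<comment> \<open>(ii) and (v): any real periodic potential\<close>
     (\<forall>Q :: nat \<Rightarrow> real.
        spec \<nu> G Q = (\<Union>n\<in>{1..\<nu>}. {lam \<nu> G Q 0 n .. lam \<nu> G Q theta_pi n})
        \<and> emeasure lborel (spec \<nu> G Q) = ennreal (4 * CARD('d) / \<xi>))
     \<and>
     \<comment> \<open>(iii)\<close>
     (\<forall>Q :: nat \<Rightarrow> real. Q \<nu> = 0 \<and> inj_on Q {1..<\<nu>} \<longrightarrow>
        spec \<nu> G Q = spec_ac \<nu> G Q \<and> spec_fb \<nu> G Q = {})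
     \<and>
     \<comment> \<open>(iv)\<close>
     (\<forall>(Q :: nat \<Rightarrow> real) (qs :: real) (m :: nat).
        Q \<nu> = 0 \<and> m \<ge> 2 \<and> card {j \<in> {1..<\<nu>}. Q j = qs} = m \<longrightarrow>
        qs + 1 \<in> spec_fb \<nu> G Q \<and> fb_multiplicity \<nu> G Q (qs + 1) (m - 1))"
proof -
  have F: "pendant_fiber \<nu> CARD('d) G"
    using nu2 by unfold_locales (simp_all add: G_def)
  have \<xi>_eq: "pendant_fiber.\<xi> \<nu> CARD('d) = \<xi>"
    using pendant_fiber.\<xi>_def[OF F] unfolding \<xi>_def by simp
  have T_eq: "pendant_fiber.T \<nu> CARD('d) = 2 * CARD('d) / \<xi>"
    using pendant_fiber.T_def[OF F] \<xi>_eq by simp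
  have exact: "exact_loop_graph G theta_pi" unfolding G_def by (rule exact_loop_graph_Gam)
  note laplacian = pendant_fiber.laplacian_spectrum[OF F refl, unfolded T_eq]
  show ?thesis
    using pendant_fiber.no_flat_bands_if_inj[OF F] pendant_fiber.flat_band_of_repeated_value[OF F]
    by (intro conjI allI impI exact spec_eq_spec_ac_Un_spec_fb
        laplacian pendant_fiber.spec_eq_UN_lam_intervals[OF F]
        pendant_fiber.emeasure_spec[OF F, unfolded \<xi>_eq]) auto
qed

end
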